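(* Let $x\in F(2)$ have a normal form that is a positive word $x=x_{i_1}^{r_1}x_{i_2}^{r_2}\cdots x_{i_n}^{r_n}$ with $n\ge1$, $i_1<\dots<i_n$, $r_k\ge1$. Let $$N(x)=\max\{\,i_k+r_k+r_{k+1}+\dots+r_n+1 : k=1,\dots,n\,\}.$$ Then: (1) $N(x)$ equals the number of carets in either tree of the reduced $2$-tree diagram for $x$; (2) $N(x)$ equals the $y$-coordinate of the last breakpoint of the graph of $x$ regarded as a homeomorphism of $\mathbb{R}$; (3) with $D(x)=r_1+\dots+r_n+i_n$, one has $\frac{D(x)}{2}\le N(x)\le D(x)+1$, so $N(x)$ is quasi-equivalent to the word length of $x$.
   Context: $F(2)$ (Thompson's group $F$) is the group of piecewise-linear orientation-preserving homeomorphisms of $[0,1]$ with breakpoints in $\mathbb{Z}[1/2]$ and slopes powers of $2$, with presentation $\langle x_0,x_1,\dots\mid x_i^{-1}x_jx_i=x_{j+1}\ (i<j)\rangle$; products are compositions on the right ($x_ix_j$ means first $x_i$, then $x_j$). Normal forms: every element is uniquely $x_{i_1}^{r_1}\cdots x_{i_n}^{r_n}x_{j_m}^{-s_m}\cdots x_{j_1}^{-s_1}$ with $i_1<\dots<i_n$, $j_1<\dots<j_m$, positive exponents, and such that if both $x_i$ and $x_i^{-1}$ occur then $x_{i+1}$ or $x_{i+1}^{-1}$ occurs. Realization on $\mathbb{R}$: $x_i\mapsto f_i$ with $f_i(t)=t$ for $t\le i$, $f_i(t)=2t-i$ for $i\le t\le i+1$, $f_i(t)=t+1$ for $t\ge i+1$,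 gives an isomorphism of $F(2)$ onto a group of piecewise-linear homeomorphisms of $\mathbb{R}$ (compositions on the right). Tree diagrams: a rooted $2$-tree is a finite rooted tree in which each non-leaf vertex (including the root, which is not a leaf) has $2$ ordered children; a caret is a non-leaf vertex with its children. Such a tree encodes a subdivision of $[0,1]$: the root is $[0,1]$ and a non-leaf vertex with interval $I$ has children the $2$ equal consecutive subintervals of $I$; leaves give the intervals of the subdivision, ordered left to right. An element $x$ is represented by a pair $(S,T)$ of rooted trees with the same number of leaves, $x$ mapping the $k$-th leaf interval of $S$ affinely onto the $k$-th leaf interval of $T$. The diagram is reduced if there is no caret all of whose children are leaves in $S$ such that the corresponding leaves of $T$ are exactly all children of a caret of $T$; each element has a unique reduced diagram, and its two trees have equally many carets. *)

theory Defs
  imports Complex_Main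
begin

text \<open>A positive normal form x_{i_1}^{r_1} ... x_{i_n}^{r_n} is encoded as the list
  [(i_1,r_1), ..., (i_n,r_n)].\<close>

definition pos_nf :: "(nat \<times> nat) list \<Rightarrow> bool" where
  "pos_nf ps \<longleftrightarrow> ps \<noteq> [] \<and> sorted_wrt (<) (map fst ps) \<and> (\<forall>p\<in>set ps. snd p \<ge> 1)"

text \<open>N(x) = max over k of i_k + r_k + ... + r_n + 1 (k is 0-based here).\<close>
definition Nval :: "(nat \<times> nat) list \<Rightarrow> nat" where
  "Nval ps = Max ((\<lambda>k. fst (ps ! k) + sum_list (map snd (drop k ps)) + 1) ` {..<length ps})"

definition Dval :: "(nat \<times> nat) list \<Rightarrow> nat" where
  "Dval ps = sum_list (map snd ps) + fst (last ps)"

definition fR :: "nat \<Rightarrow> real \<Rightarrow> real" where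
  "fR i t = (if t \<le> real i then t else if t \<le> real i + 1 then 2 * t - real i else t + 1)"

definition fRinv :: "nat \<Rightarrow> real \<Rightarrow> real" where
  "fRinv i t = (if t \<le> real i then t else if t \<le> real i + 2 then (t + real i) / 2 else t - 1)"

text \<open>Right composition: first x_{i_1}^{r_1}, then the rest.\<close>
fun posR :: "(nat \<times> nat) list \<Rightarrow> real \<Rightarrow> real" where
  "posR [] = id"
| "posR ((i, r) # ps) = posR ps \<circ> (fR i ^^ r)"

text \<open>Words in the generators x_0, x_1 and their inverses: (i, True) is x_i,
  (i, False) is x_i^{-1}; evaluated on the real line with right composition.\<close>
fun genR :: "nat \<times> bool \<Rightarrow> real \<Rightarrow> real" where
  "genR (i, True) = fR i"
| "genR (i, False) = fRinv i"

fun wordR :: "(nat \<times> bool) list \<Rightarrow> real \<Rightarrow> real" where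
  "wordR [] = id"
| "wordR (g # ws) = wordR ws \<circ> genR g"

definition word_length :: "(real \<Rightarrow> real) \<Rightarrow> nat" where
  "word_length g = (LEAST n. \<exists>ws. length ws = n \<and> (\<forall>w\<in>set ws. fst w \<le> 1) \<and> wordR ws = g)"

definition g0 :: "real \<Rightarrow> real" where
  "g0 t = (if t \<le> 1/4 then 2 * t else if t \<le> 1/2 then t + 1/4 else t / 2 + 1/2)"

definition gI :: "nat \<Rightarrow> real \<Rightarrow> real" where
  "gI i t = (let a = 1 - 1 / 2 ^ i; c = (2::real) ^ i in
             if t \<le> a then t else a + g0 (c * (t - a)) / c)"

fun posI :: "(nat \<times> nat) list \<Rightarrow> real \<Rightarrow> real" where
  "posI [] = id"
| "posI ((i, r) # ps) = posI ps \<circ> (gI i ^^ r)"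

datatype tree = Leaf | Node tree tree

fun carets :: "tree \<Rightarrow> nat" where
  "carets Leaf = 0"
| "carets (Node l r) = Suc (carets l + carets r)"

fun nleaves :: "tree \<Rightarrow> nat" where
  "nleaves Leaf = 1"
| "nleaves (Node l r) = nleaves l + nleaves r"

text \<open>Leaf intervals of the subdivision of [a,b], left to right.\<close>
fun ivs :: "tree \<Rightarrow> real \<Rightarrow> real \<Rightarrow> (real \<times> real) list" where
  "ivs Leaf a b = [(a, b)]"
| "ivs (Node l r) a b = ivs l a ((a + b) / 2) @ ivs r ((a + b) / 2) b"

text \<open>cherries t k: indices j (leaves numbered from k) such that leaves j, j+1 are
  exactly the two children of a caret.\<close>
fun cherries :: "tree \<Rightarrow> nat \<Rightarrow> nat set" where
  "cherries Leaf k = {}"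
| "cherries (Node Leaf Leaf) k = {k}"
| "cherries (Node l r) k = cherries l k \<union> cherries r (k + nleaves l)"

definition rooted_tree :: "tree \<Rightarrow> bool" where
  "rooted_tree t \<longleftrightarrow> t \<noteq> Leaf"

definition represents :: "(real \<Rightarrow> real) \<Rightarrow> tree \<Rightarrow> tree \<Rightarrow> bool" where
  "represents g S T \<longleftrightarrow> rooted_tree S \<and> rooted_tree T \<and> nleaves S = nleaves T \<and>
     (\<forall>k < nleaves S. \<forall>t. fst (ivs S 0 1 ! k) \<le> t \<and> t \<le> snd (ivs S 0 1 ! k) \<longrightarrow>
        g t = fst (ivs T 0 1 ! k) + (snd (ivs T 0 1 ! k) - fst (ivs T 0 1 ! k))
              / (snd (ivs S 0 1 ! k) - fst (ivs S 0 1 ! k)) * (t - fst (ivs S 0 1 ! k)))"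

definition reduced :: "tree \<Rightarrow> tree \<Rightarrow> bool" where
  "reduced S T \<longleftrightarrow> cherries S 0 \<inter> cherries T 0 = {}"

end

theory Submission
  imports Defs
begin

text \<open>
  Put \<open>t\<^sub>0 = N(x) - (r\<^sub>1 + \<dots> + r\<^sub>n)\<close>. By induction on the normal form, \<open>x\<close> acts on
  \<open>[t\<^sub>0, \<infinity>)\<close> as the translation by \<open>r\<^sub>1 + \<dots> + r\<^sub>n\<close>, while just left of \<open>t\<^sub>0\<close> all its
  difference quotients are at least 2: the kink of the factor \<open>x\<^sub>i\<^sub>k\<^sup>r\<^sup>k\<close> attaining the maximum
  in \<open>N(x)\<close> survives, because all the maps involved are expanding. So \<open>t\<^sub>0\<close> is the last
  breakpoint and \<open>x(t\<^sub>0) = N(x)\<close>. A word of length \<open>m\<close> in \<open>x\<^sub>0\<^sup>\<plusminus>\<^sup>1, x\<^sub>1\<^sup>\<plusminus>\<^sup>1\<close> is a translation by at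
  most \<open>m\<close> on \<open>[4 + m, \<infinity>)\<close>, hence cannot have a kink beyond \<open>4 + m\<close>; this gives
  \<open>N(x) \<le> 2m + 4\<close>. Conversely, writing \<open>x\<^sub>i = x\<^sub>0\<^sup>1\<^sup>-\<^sup>i x\<^sub>1 x\<^sub>0\<^sup>i\<^sup>-\<^sup>1\<close>, the conjugating powers of
  consecutive factors telescope and \<open>x\<close> is spelled with at most \<open>4 N(x)\<close> letters.

  On \<open>[0, 1]\<close>, \<open>x\<^sub>i\<close> maps the leaf intervals of a tree rotated at the \<open>i\<close>-th vertex of its
  right spine onto those of the unrotated tree. Undoing the factors of the normal form one by
  one starting from the vine with \<open>N(x)\<close> carets yields a diagram for \<open>x\<close>, which is reduced. Any
  two reduced diagrams have the same size, since in both the source tree is obtained by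
  cutting the dyadic subdivision at the maximal dyadic intervals mapped affinely onto dyadic
  intervals.
\<close>

section \<open>The invariant \<open>N\<close>\<close>

abbreviation exponent_sum :: "(nat \<times> nat) list \<Rightarrow> nat" where
  "exponent_sum ps \<equiv> sum_list (map snd ps)"

fun N_rec :: "(nat \<times> nat) list \<Rightarrow> nat" where
  "N_rec [] = 0"
| "N_rec ((i, r) # ps) = max (i + r + exponent_sum ps + 1) (N_rec ps)"

definition N_term :: "(nat \<times> nat) list \<Rightarrow> nat \<Rightarrow> nat" where
  "N_term ps k = fst (ps ! k) + exponent_sum (drop k ps) + 1"

lemma N_term_Cons_0: "N_term ((i, r) # ps) 0 = i + r + exponent_sum ps + 1"
  by (simp add: N_term_def)

lemma N_term_Cons_Suc: "N_term (p # ps) (Suc k) = N_term ps k"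
  by (simp add: N_term_def)

lemma N_term_le_N_rec: "k < length ps \<Longrightarrow> N_term ps k \<le> N_rec ps"
proof (induction ps arbitrary: k)
  case (Cons p ps)
  then show ?case
    by (cases p; cases k) (auto simp: N_term_Cons_0 N_term_Cons_Suc le_max_iff_disj)
qed simp

lemma N_rec_attained: "ps \<noteq> [] \<Longrightarrow> \<exists>k<length ps. N_term ps k = N_rec ps"
proof (induction ps)
  case (Cons p ps)
  obtain i r where p: "p = (i, r)" by fastforce
  show ?case
  proof (cases "ps = [] \<or> N_rec ps \<le> i + r + exponent_sum ps + 1")
    case True
    then have "N_term (p # ps) 0 = N_rec (p # ps)" by (auto simp: p N_term_Cons_0)
    then show ?thesis by blast
  next
    case False
    with Cons.IH obtain k where "k < length ps" "N_term ps k = N_rec ps" by blast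
    with False show ?thesis by (auto simp: p N_term_Cons_Suc intro!: exI[of _ "Suc k"])
  qed
qed simp

lemma Nval_eq_N_rec: "ps \<noteq> [] \<Longrightarrow> Nval ps = N_rec ps"
  unfolding Nval_def N_term_def[symmetric]
  by (rule Max_eqI) (use N_term_le_N_rec N_rec_attained in force)+

lemma exponent_sum_less_N_rec: "ps \<noteq> [] \<Longrightarrow> exponent_sum ps < N_rec ps"
  by (cases ps) auto

lemma last_index_less_N_rec:
  "ps \<noteq> [] \<Longrightarrow> \<forall>p\<in>set ps. 1 \<le> snd p \<Longrightarrow> fst (last ps) + 1 < N_rec ps"
proof (induction ps)
  case (Cons p ps)
  then show ?case by (cases p; cases "ps = []") auto
qed simp

lemma N_rec_le_Dval: "sorted_wrt (<) (map fst ps) \<Longrightarrow> N_rec ps \<le> Dval ps + 1"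
proof (induction ps)
  case (Cons p ps)
  obtain i r where p: "p = (i, r)" by fastforce
  have "i \<le> fst (last (p # ps))"
    using Cons.prems by (cases "ps = []") (auto simp: p less_imp_le)
  with Cons show ?case by (cases "ps = []") (auto simp: p Dval_def)
qed simp

lemma pos_nf_Dval_bounds:
  assumes "pos_nf ps"
  shows "real (Dval ps) / 2 \<le> real (Nval ps)" and "Nval ps \<le> Dval ps + 1"
proof -
  have ps: "ps \<noteq> []" "sorted_wrt (<) (map fst ps)" "\<forall>p\<in>set ps. 1 \<le> snd p"
    using assms by (auto simp: pos_nf_def)
  have "Dval ps + 2 \<le> 2 * N_rec ps"
    using exponent_sum_less_N_rec[OF ps(1)] last_index_less_N_rec[OF ps(1,3)]
    by (simp add: Dval_def)
  then show "real (Dval ps) / 2 \<le> real (Nval ps)"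
    using Nval_eq_N_rec[OF ps(1)] by simp
  show "Nval ps \<le> Dval ps + 1"
    using N_rec_le_Dval[OF ps(2)] Nval_eq_N_rec[OF ps(1)] by simp
qed

section \<open>The last breakpoint on the real line\<close>

definition expanding :: "(real \<Rightarrow> real) \<Rightarrow> bool" where
  "expanding h \<longleftrightarrow> (\<forall>a b. a \<le> b \<longrightarrow> b - a \<le> h b - h a)"

lemma expandingD: "expanding h \<Longrightarrow> a \<le> b \<Longrightarrow> b - a \<le> h b - h a"
  unfolding expanding_def by blast

lemma expanding_id: "expanding id"
  by (simp add: expanding_def)

lemma expanding_comp: "expanding g \<Longrightarrow> expanding h \<Longrightarrow> expanding (g \<circ> h)"
  unfolding expanding_def by (smt (verit) comp_apply)

lemma expanding_funpow: "expanding h \<Longrightarrow> expanding (h ^^ n)"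
  by (induction n) (simp_all add: expanding_id expanding_comp)

lemma expanding_fR: "expanding (fR i)"
  unfolding expanding_def fR_def by auto

lemma expanding_posR: "expanding (posR ps)"
proof (induction ps)
  case (Cons p ps)
  then show ?case
    by (cases p) (simp only: posR.simps expanding_comp expanding_funpow expanding_fR)
qed (simp only: posR.simps expanding_id)

definition steep_left :: "(real \<Rightarrow> real) \<Rightarrow> real \<Rightarrow> bool" where
  "steep_left g t \<longleftrightarrow> (\<exists>d>0. \<forall>x. t - d < x \<and> x \<le> t \<longrightarrow> 2 * (t - x) \<le> g t - g x)"

lemma steep_left_comp_expanding:
  assumes "steep_left h t" and "expanding g"
  shows "steep_left (g \<circ> h) t"
proof -
  obtain d where "d > 0" and d: "\<And>x. t - d < x \<Longrightarrow> x \<le> t \<Longrightarrow> 2 * (t - x) \<le> h t - h x"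
    using assms(1) unfolding steep_left_def by blast
  have "2 * (t - x) \<le> g (h t) - g (h x)" if "t - d < x" "x \<le> t" for x
  proof -
    have "2 * (t - x) \<le> h t - h x" using d[OF that] .
    moreover from this have "h t - h x \<le> g (h t) - g (h x)"
      using expandingD[OF assms(2)] that by simp
    ultimately show ?thesis by linarith
  qed
  with \<open>d > 0\<close> show ?thesis unfolding steep_left_def by auto
qed

lemma steep_left_comp_shift:
  assumes "steep_left g (t + c)" and "s < t" and shift: "\<And>x. s < x \<Longrightarrow> h x = x + c"
  shows "steep_left (g \<circ> h) t"
proof -
  obtain d where "d > 0"
    and d: "\<And>y. t + c - d < y \<Longrightarrow> y \<le> t + c \<Longrightarrow> 2 * (t + c - y) \<le> g (t + c) - g y"
    using assms(1) unfolding steep_left_def by blast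
  have "2 * (t - x) \<le> g (h t) - g (h x)" if "t - min d (t - s) < x" "x \<le> t" for x
    using d[of "x + c"] shift[of x] shift[of t] that \<open>s < t\<close> by simp
  with \<open>d > 0\<close> \<open>s < t\<close> show ?thesis
    unfolding steep_left_def by (intro exI[of _ "min d (t - s)"]) auto
qed

lemma steep_left_fR: "steep_left (fR i) (real i + 1)"
  unfolding steep_left_def fR_def by (intro exI[of _ 1]) auto

lemma steep_left_fR_power: "1 \<le> r \<Longrightarrow> steep_left (fR i ^^ r) (real i + 1)"
  by (cases r) (simp_all only: funpow_Suc_right steep_left_comp_expanding steep_left_fR
                  expanding_funpow expanding_fR)

lemma fR_power_shift: "real i + 1 \<le> t \<Longrightarrow> (fR i ^^ r) t = t + r"
  by (induction r) (simp_all add: fR_def)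

lemma posR_shift:
  "real (N_rec ps) - real (exponent_sum ps) \<le> t \<Longrightarrow> posR ps t = t + real (exponent_sum ps)"
proof (induction ps arbitrary: t)
  case (Cons p ps)
  obtain i r where p: "p = (i, r)" by fastforce
  with Cons.prems have "real i + 1 \<le> t" "real (N_rec ps) - real (exponent_sum ps) \<le> t + r"
    by auto
  with Cons.IH show ?case by (simp add: p fR_power_shift)
qed simp

lemma steep_left_posR:
  "ps \<noteq> [] \<Longrightarrow> \<forall>p\<in>set ps. 1 \<le> snd p \<Longrightarrow>
     steep_left (posR ps) (real (N_rec ps) - real (exponent_sum ps))"
proof (induction ps)
  case (Cons p ps)
  obtain i r where p: "p = (i, r)" by fastforce
  with Cons.prems have "1 \<le> r" by auto
  show ?case
  proof (cases "N_rec ps \<le> i + r + exponent_sum ps + 1")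
    case True
    then have "real (N_rec (p # ps)) - real (exponent_sum (p # ps)) = real i + 1"
      by (simp add: p)
    moreover have "steep_left (posR ps \<circ> (fR i ^^ r)) (real i + 1)"
      using steep_left_comp_expanding[OF steep_left_fR_power[OF \<open>1 \<le> r\<close>] expanding_posR] .
    ultimately show ?thesis by (simp only: p posR.simps)
  next
    case False
    define t where "t = real (N_rec ps) - real (exponent_sum ps) - r"
    have "ps \<noteq> []" using False by auto
    with Cons have "steep_left (posR ps) (t + r)" by (simp add: t_def)
    moreover have "real i + 1 < t" using False by (simp add: t_def)
    moreover have "(fR i ^^ r) x = x + r" if "real i + 1 < x" for x
      using fR_power_shift that by simp
    ultimately have "steep_left (posR ps \<circ> (fR i ^^ r)) t" by (rule steep_left_comp_shift)
    moreover have "t = real (N_rec (p # ps)) - real (exponent_sum (p # ps))"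
      using False by (simp add: p t_def)
    ultimately show ?thesis by (simp only: p posR.simps)
  qed
qed simp

lemma steep_left_not_differentiable:
  fixes g :: "real \<Rightarrow> real"
  assumes shift: "\<And>y. t \<le> y \<Longrightarrow> g y = y + c" and "steep_left g t"
  shows "\<not> g differentiable (at t)"
proof
  assume "g differentiable (at t)"
  then obtain D where "(g has_real_derivative D) (at t)" by (auto simp: real_differentiable_def)
  then have lim: "((\<lambda>y. (g y - g t) / (y - t)) \<longlongrightarrow> D) (at t)"
    by (simp add: has_field_derivative_iff)
  have "eventually (\<lambda>y. (g y - g t) / (y - t) = 1) (at_right t)"
    using eventually_at_right_real[of t "t + 1"] by (rule eventually_mono) (auto simp: shift)
  then have "((\<lambda>y. (g y - g t) / (y - t)) \<longlongrightarrow> 1) (at_right t)"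
    by (rule tendsto_eventually)
  moreover have "((\<lambda>y. (g y - g t) / (y - t)) \<longlongrightarrow> D) (at_right t)"
    using lim by (rule tendsto_mono[OF at_le, rotated]) simp
  ultimately have "D = 1" using tendsto_unique trivial_limit_at_right_real by blast
  obtain d where "d > 0" and d: "\<And>x. t - d < x \<Longrightarrow> x \<le> t \<Longrightarrow> 2 * (t - x) \<le> g t - g x"
    using assms(2) unfolding steep_left_def by blast
  have "eventually (\<lambda>y. y \<in> {t - d<..<t}) (at_left t)"
    by (rule eventually_at_left_real) (use \<open>d > 0\<close> in simp)
  moreover have "2 \<le> (g y - g t) / (y - t)" if "y \<in> {t - d<..<t}" for y
    using d[of y] that by (simp add: le_divide_eq)
  ultimately have "eventually (\<lambda>y. 2 \<le> (g y - g t) / (y - t)) (at_left t)"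
    by (rule eventually_mono)
  moreover have "((\<lambda>y. (g y - g t) / (y - t)) \<longlongrightarrow> D) (at_left t)"
    using lim by (rule tendsto_mono[OF at_le, rotated]) simp
  ultimately have "2 \<le> D" using tendsto_lowerbound by force
  with \<open>D = 1\<close> show False by simp
qed

lemma shift_differentiable:
  fixes g :: "real \<Rightarrow> real"
  assumes "\<And>y. t \<le> y \<Longrightarrow> g y = y + c" and "t < s"
  shows "g differentiable (at s)"
proof -
  have "((\<lambda>y. y + c) has_real_derivative 1) (at s)" by (auto intro!: derivative_eq_intros)
  then have "(g has_real_derivative 1) (at s)"
    by (rule has_field_derivative_transform_within_open[where S = "{t<..}"]) (use assms in auto)
  then show ?thesis by (auto simp: real_differentiable_def)
qed

lemma steep_left_le_shift_start:
  assumes "steep_left g t" and shift: "\<And>y. c \<le> y \<Longrightarrow> g y = y + k"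
  shows "t \<le> c"
proof (rule ccontr)
  assume "\<not> t \<le> c"
  obtain d where "d > 0" and d: "\<And>x. t - d < x \<Longrightarrow> x \<le> t \<Longrightarrow> 2 * (t - x) \<le> g t - g x"
    using assms(1) unfolding steep_left_def by blast
  define x where "x = max c (t - d / 2)"
  have "t - d < x" "x < t" "c \<le> x" using \<open>d > 0\<close> \<open>\<not> t \<le> c\<close> by (auto simp: x_def)
  then show False using d[of x] shift[of x] shift[of t] by simp
qed

lemma posR_last_breakpoint:
  assumes "pos_nf ps"
  shows "\<exists>t. \<not> posR ps differentiable (at t) \<and> (\<forall>s > t. posR ps differentiable (at s)) \<and>
             posR ps t = real (Nval ps)"
proof (intro exI conjI allI impI)
  have ps: "ps \<noteq> []" "\<forall>p\<in>set ps. 1 \<le> snd p" using assms by (auto simp: pos_nf_def)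
  let ?t = "real (N_rec ps) - real (exponent_sum ps)"
  show "\<not> posR ps differentiable (at ?t)"
    using steep_left_not_differentiable[OF posR_shift steep_left_posR[OF ps]] by simp
  show "posR ps differentiable (at s)" if "?t < s" for s
    using shift_differentiable[OF posR_shift that] by simp
  show "posR ps ?t = real (Nval ps)" using posR_shift[of ps ?t] Nval_eq_N_rec[OF ps(1)] by simp
qed

section \<open>Word length\<close>

lemma funpow_inverse:
  fixes h k :: "'a \<Rightarrow> 'a"
  assumes "\<And>x. k (h x) = x"
  shows "(k ^^ n) ((h ^^ n) x) = x"
proof (induction n arbitrary: x)
  case (Suc n)
  have "(k ^^ Suc n) ((h ^^ Suc n) x) = k ((k ^^ n) ((h ^^ n) (h x)))"
    by (simp add: funpow_swap1[of h])
  then show ?case by (simp add: Suc.IH assms)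
qed simp

lemma funpow_conjugate:
  assumes "\<And>x. k (h x) = x"
  shows "((\<lambda>x. h (g (k x))) ^^ n) (h x) = h ((g ^^ n) x)"
  by (induction n) (simp_all add: assms)

lemma funpow_diff_inverse:
  assumes "\<And>x. k (h x) = x"
  shows "(h ^^ (c - e)) ((k ^^ (e - c)) x) = (k ^^ e) ((h ^^ c) x)"
proof (cases "c \<le> e")
  case True
  then have "(k ^^ e) ((h ^^ c) x) = (k ^^ (e - c)) ((k ^^ c) ((h ^^ c) x))"
    by (metis funpow_add le_add_diff_inverse2 comp_apply)
  with True show ?thesis by (simp add: funpow_inverse[where h = h and k = k, OF assms])
next
  case False
  then have "(k ^^ e) ((h ^^ c) x) = (k ^^ e) ((h ^^ e) ((h ^^ (c - e)) x))"
    by (metis funpow_add le_add_diff_inverse nat_le_linear comp_apply)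
  with False show ?thesis by (simp add: funpow_inverse[where h = h and k = k, OF assms])
qed

lemma fRinv_fR: "fRinv i (fR i t) = t"
  by (simp add: fR_def fRinv_def)

lemma fR_fRinv: "fR i (fRinv i t) = t"
proof -
  have "2 * ((t + real i) / 2) = t + real i" by simp
  then show ?thesis unfolding fR_def fRinv_def by (simp del: times_divide_eq_right)
qed

lemma fR_Suc_conjugate: "1 \<le> j \<Longrightarrow> fR (Suc j) t = fR 0 (fR j (fRinv 0 t))"
  by (cases "t \<le> 0"; cases "t \<le> 2"; cases "t \<le> real j + 1"; cases "t \<le> real j + 2")
     (simp_all add: fR_def fRinv_def)

lemma fR_Suc_conjugate_fR1: "fR (Suc n) t = (fR 0 ^^ n) (fR 1 ((fRinv 0 ^^ n) t))"
proof (induction n arbitrary: t)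
  case (Suc n)
  have "fR (Suc (Suc n)) t = fR 0 ((fR 0 ^^ n) (fR 1 ((fRinv 0 ^^ n) (fRinv 0 t))))"
    by (simp only: fR_Suc_conjugate Suc.IH)
  also have "\<dots> = (fR 0 ^^ Suc n) (fR 1 ((fRinv 0 ^^ Suc n) t))"
    by (simp only: comp_apply funpow_Suc_right[where f = "fRinv 0"] funpow.simps(2)[where f = "fR 0"])
  finally show ?case .
qed simp

lemma fR_Suc_power_conjugate:
  "(fR (Suc n) ^^ r) t = (fR 0 ^^ n) ((fR 1 ^^ r) ((fRinv 0 ^^ n) t))"
proof -
  have inv: "(fRinv 0 ^^ n) ((fR 0 ^^ n) x) = x" for x by (rule funpow_inverse) (rule fRinv_fR)
  have "fR (Suc n) = (\<lambda>x. (fR 0 ^^ n) (fR 1 ((fRinv 0 ^^ n) x)))"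
    by (rule ext) (rule fR_Suc_conjugate_fR1)
  then have "(fR (Suc n) ^^ r) ((fR 0 ^^ n) y) = (fR 0 ^^ n) ((fR 1 ^^ r) y)" for y
    using funpow_conjugate[where h = "fR 0 ^^ n" and k = "fRinv 0 ^^ n", OF inv] by simp
  from this[of "(fRinv 0 ^^ n) t"] show ?thesis
    by (simp add: funpow_inverse fR_fRinv)
qed

lemma wordR_append: "wordR (xs @ ys) t = wordR ys (wordR xs t)"
  by (induction xs arbitrary: t) auto

lemma wordR_replicate: "wordR (replicate n g) t = (genR g ^^ n) t"
  by (induction n arbitrary: t) (auto simp: funpow_Suc_right simp del: funpow.simps)

text \<open>\<open>x01_word c ps\<close> spells \<open>x\<^sub>0\<^sup>c\<close> followed by the normal form \<open>ps\<close>, using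
  \<open>x\<^sub>n\<^sub>+\<^sub>1 = x\<^sub>0\<^sup>-\<^sup>n x\<^sub>1 x\<^sub>0\<^sup>n\<close>; the pending power \<open>c\<close> of \<open>x\<^sub>0\<close> is carried along, so that
  the conjugating powers of consecutive factors telescope.\<close>

fun x01_word :: "nat \<Rightarrow> (nat \<times> nat) list \<Rightarrow> (nat \<times> bool) list" where
  "x01_word c [] = replicate c (0, True)"
| "x01_word c ((0, r) # ps) = x01_word (c + r) ps"
| "x01_word c ((Suc n, r) # ps) =
     replicate (n - c) (0, False) @ replicate (c - n) (0, True) @ replicate r (1, True) @
     x01_word n ps"

lemma x01_word_generators: "\<forall>w\<in>set (x01_word c ps). fst w \<le> 1"
  by (induction c ps rule: x01_word.induct) auto

lemma wordR_x01_word: "wordR (x01_word c ps) t = posR ps ((fR 0 ^^ c) t)"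
proof (induction c ps arbitrary: t rule: x01_word.induct)
  case (1 c)
  then show ?case by (simp add: wordR_replicate)
next
  case (2 c r ps)
  have "(fR 0 ^^ (c + r)) t = (fR 0 ^^ r) ((fR 0 ^^ c) t)"
    by (metis add.commute funpow_add comp_apply)
  with 2 show ?case by simp
next
  case (3 c n r ps)
  have "wordR (x01_word c ((Suc n, r) # ps)) t =
        posR ps ((fR 0 ^^ n) ((fR 1 ^^ r) ((fR 0 ^^ (c - n)) ((fRinv 0 ^^ (n - c)) t))))"
    using 3 by (simp add: wordR_append wordR_replicate)
  also have "(fR 0 ^^ (c - n)) ((fRinv 0 ^^ (n - c)) t) = (fRinv 0 ^^ n) ((fR 0 ^^ c) t)"
    by (rule funpow_diff_inverse) (rule fRinv_fR)
  also have "posR ps ((fR 0 ^^ n) ((fR 1 ^^ r) ((fRinv 0 ^^ n) ((fR 0 ^^ c) t)))) =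
             posR ((Suc n, r) # ps) ((fR 0 ^^ c) t)"
    by (simp only: posR.simps comp_apply fR_Suc_power_conjugate)
  finally show ?case .
qed

fun max_index :: "(nat \<times> nat) list \<Rightarrow> nat" where
  "max_index [] = 0"
| "max_index (p # ps) = max (fst p) (max_index ps)"

lemma max_index_le_N_rec: "max_index ps \<le> N_rec ps"
  by (induction ps rule: N_rec.induct) auto

lemma exponent_sum_le_N_rec: "exponent_sum ps \<le> N_rec ps"
  by (induction ps rule: N_rec.induct) auto

lemma length_x01_word_telescoping:
  "\<forall>p\<in>set ps. c < fst p \<Longrightarrow> sorted_wrt (<) (map fst ps) \<Longrightarrow>
     length (x01_word c ps) + c \<le> 2 * max c (max_index ps) + exponent_sum ps"
proof (induction c ps rule: x01_word.induct)
  case (3 c n r ps)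
  then have "length (x01_word n ps) + n \<le> 2 * max n (max_index ps) + exponent_sum ps"
    by force
  also have "\<dots> \<le> 2 * max c (max_index ((Suc n, r) # ps)) + exponent_sum ps"
    by (simp add: max_def)
  finally show ?case using "3.prems" by simp
qed auto

lemma length_x01_word:
  "\<forall>p\<in>set ps. 0 < fst p \<Longrightarrow> sorted_wrt (<) (map fst ps) \<Longrightarrow>
     length (x01_word c ps) \<le> 2 * c + 2 * max_index ps + exponent_sum ps"
proof (induction c ps rule: x01_word.induct)
  case (3 c n r ps)
  then have "length (x01_word n ps) + n \<le> 2 * max n (max_index ps) + exponent_sum ps"
    by (intro length_x01_word_telescoping) force+
  also have "\<dots> \<le> 2 * max_index ((Suc n, r) # ps) + exponent_sum ps"
    by (simp add: max_def)
  finally show ?case by simp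
qed auto

lemma word_length_le: "\<forall>w\<in>set ws. fst w \<le> 1 \<Longrightarrow> wordR ws = g \<Longrightarrow> word_length g \<le> length ws"
  unfolding word_length_def by (rule Least_le) blast

lemma word_length_attained:
  assumes "\<forall>w\<in>set ws. fst w \<le> 1" and "wordR ws = g"
  obtains ws' where "length ws' = word_length g" "\<forall>w\<in>set ws'. fst w \<le> 1" "wordR ws' = g"
proof -
  have "\<exists>n ws. length ws = n \<and> (\<forall>w\<in>set ws. fst w \<le> 1) \<and> wordR ws = g" using assms by blast
  then have "\<exists>ws'. length ws' = word_length g \<and> (\<forall>w\<in>set ws'. fst w \<le> 1) \<and> wordR ws' = g"
    unfolding word_length_def by (rule LeastI_ex)
  with that show ?thesis by blast
qed

lemma wordR_x01_word_0: "wordR (x01_word 0 ps) = posR ps"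
  by (rule ext) (simp add: wordR_x01_word)

lemma word_length_posR_le:
  assumes "pos_nf ps"
  shows "word_length (posR ps) \<le> 4 * N_rec ps"
proof -
  have sorted: "sorted_wrt (<) (map fst ps)" and "ps \<noteq> []"
    using assms by (auto simp: pos_nf_def)
  then obtain i r ps' where ps: "ps = (i, r) # ps'" by (cases ps) auto
  have "length (x01_word 0 ps) \<le> 2 * exponent_sum ps + 2 * max_index ps"
  proof (cases i)
    case 0
    with sorted have "length (x01_word r ps') \<le> 2 * r + 2 * max_index ps' + exponent_sum ps'"
      by (intro length_x01_word) (auto simp: ps)
    with 0 show ?thesis by (simp add: ps)
  next
    case (Suc n)
    with sorted have "length (x01_word 0 ps) \<le> 2 * max_index ps + exponent_sum ps"
      by (intro length_x01_word[of ps 0, simplified]) (auto simp: ps)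
    then show ?thesis by simp
  qed
  moreover have "word_length (posR ps) \<le> length (x01_word 0 ps)"
    using word_length_le[OF x01_word_generators wordR_x01_word_0] .
  ultimately show ?thesis
    using max_index_le_N_rec[of ps] exponent_sum_le_N_rec[of ps] by simp
qed

lemma genR_shift: "fst g \<le> 1 \<Longrightarrow> 4 \<le> t \<Longrightarrow> genR g t = t + (if snd g then 1 else -1)"
  by (cases g; cases "snd g") (auto simp: fR_def fRinv_def)

lemma wordR_shift:
  "\<forall>w\<in>set ws. fst w \<le> 1 \<Longrightarrow>
     \<exists>k::int. \<bar>k\<bar> \<le> length ws \<and> (\<forall>t \<ge> 4 + real (length ws). wordR ws t = t + real_of_int k)"
proof (induction ws)
  case (Cons g ws)
  then obtain k :: int
    where k: "\<bar>k\<bar> \<le> length ws" "\<forall>t \<ge> 4 + real (length ws). wordR ws t = t + k"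
    by auto
  define e :: int where "e = (if snd g then 1 else -1)"
  have "wordR (g # ws) t = t + real_of_int (k + e)" if "4 + real (length (g # ws)) \<le> t" for t
    using that k(2) genR_shift[of g t] Cons.prems by (auto simp: e_def)
  moreover have "\<bar>k + e\<bar> \<le> length (g # ws)" using k(1) by (auto simp: e_def)
  ultimately show ?case by blast
qed simp

lemma N_rec_le_word_length:
  assumes "ps \<noteq> []" and "\<forall>p\<in>set ps. 1 \<le> snd p"
    and "\<forall>w\<in>set ws. fst w \<le> 1" and "wordR ws = posR ps"
  shows "real (N_rec ps) \<le> 4 + 2 * real (length ws)"
proof -
  define c where "c = 4 + real (length ws)"
  obtain k :: int where k: "\<bar>k\<bar> \<le> length ws" "\<And>t. c \<le> t \<Longrightarrow> posR ps t = t + k"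
    using wordR_shift[OF assms(3)] assms(4) unfolding c_def by metis
  have "real (N_rec ps) - real (exponent_sum ps) \<le> c"
    using steep_left_le_shift_start[OF steep_left_posR[OF assms(1,2)] k(2)] .
  moreover from this have "real (exponent_sum ps) = k"
    using posR_shift[of ps c] k(2)[of c] by simp
  ultimately show ?thesis using k(1) by (simp add: c_def)
qed

lemma Nval_quasi_equivalent_word_length:
  "\<exists>C K::real. C > 0 \<and>
     (\<forall>ps. pos_nf ps \<longrightarrow>
        real (Nval ps) \<le> C * real (word_length (posR ps)) + K \<and>
        real (word_length (posR ps)) \<le> C * real (Nval ps) + K)"
proof (intro exI[of _ 4] conjI allI impI)
  fix ps assume "pos_nf ps"
  then have ps: "ps \<noteq> []" "\<forall>p\<in>set ps. 1 \<le> snd p" by (auto simp: pos_nf_def)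
  obtain ws where "length ws = word_length (posR ps)" "\<forall>w\<in>set ws. fst w \<le> 1" "wordR ws = posR ps"
    using word_length_attained[OF x01_word_generators wordR_x01_word_0] .
  then show "real (Nval ps) \<le> 4 * real (word_length (posR ps)) + 4"
    using N_rec_le_word_length[OF ps] Nval_eq_N_rec[OF ps(1)] by force
  show "real (word_length (posR ps)) \<le> 4 * real (Nval ps) + 4"
    using word_length_posR_le[OF \<open>pos_nf ps\<close>] Nval_eq_N_rec[OF ps(1)] by simp
qed simp

section \<open>Tree diagrams\<close>

definition maps_affinely :: "(real \<Rightarrow> real) \<Rightarrow> real \<Rightarrow> real \<Rightarrow> real \<Rightarrow> real \<Rightarrow> bool" where
  "maps_affinely g a b c d \<longleftrightarrow> (\<forall>t. a \<le> t \<and> t \<le> b \<longrightarrow> g t = c + (d - c) / (b - a) * (t - a))"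

lemma maps_affinely_endpoints: "a < b \<Longrightarrow> maps_affinely g a b c d \<Longrightarrow> g a = c \<and> g b = d"
  unfolding maps_affinely_def by auto

lemma maps_affinely_identity: "(\<And>t. a \<le> t \<Longrightarrow> t \<le> b \<Longrightarrow> g t = t) \<Longrightarrow> a < b \<Longrightarrow> maps_affinely g a b a b"
  unfolding maps_affinely_def by auto

lemma maps_affinely_comp:
  assumes "a < b" and "c < d" and g: "maps_affinely g a b c d" and h: "maps_affinely h c d e f"
  shows "maps_affinely (h \<circ> g) a b e f"
  unfolding maps_affinely_def
proof (intro allI impI)
  fix t assume t: "a \<le> t \<and> t \<le> b"
  define u where "u = (t - a) / (b - a)"
  have u: "0 \<le> u" "u \<le> 1" using t \<open>a < b\<close> by (auto simp: u_def divide_simps)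
  have gt: "g t = c + (d - c) * u" using g t unfolding maps_affinely_def u_def by auto
  have "(d - c) * u \<le> d - c" using mult_left_mono[of u 1 "d - c"] u \<open>c < d\<close> by simp
  moreover have "0 \<le> (d - c) * u" using u \<open>c < d\<close> by simp
  ultimately have "c \<le> g t" "g t \<le> d" unfolding gt by auto
  then have "h (g t) = e + (f - e) / (d - c) * (g t - c)" using h unfolding maps_affinely_def by auto
  also have "\<dots> = e + (f - e) * u" unfolding gt using \<open>c < d\<close> by simp
  finally show "(h \<circ> g) t = e + (f - e) / (b - a) * (t - a)" by (simp add: u_def)
qed

lemma maps_affinely_halves:
  assumes "a < b" and g: "maps_affinely g a b c d"
  shows "maps_affinely g a ((a + b) / 2) c ((c + d) / 2)"
    and "maps_affinely g ((a + b) / 2) b ((c + d) / 2) d"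
proof -
  have gt: "g t = c + (d - c) / (b - a) * (t - a)" if "a \<le> t" "t \<le> b" for t
    using g that by (simp add: maps_affinely_def)
  show "maps_affinely g a ((a + b) / 2) c ((c + d) / 2)"
    unfolding maps_affinely_def
  proof (intro allI impI)
    fix t assume "a \<le> t \<and> t \<le> (a + b) / 2"
    with gt[of t] \<open>a < b\<close> show "g t = c + ((c + d) / 2 - c) / ((a + b) / 2 - a) * (t - a)"
      by (simp add: field_simps)
  qed
  show "maps_affinely g ((a + b) / 2) b ((c + d) / 2) d"
    unfolding maps_affinely_def
  proof (intro allI impI)
    fix t assume "(a + b) / 2 \<le> t \<and> t \<le> b"
    with gt[of t] \<open>a < b\<close>
    show "g t = (c + d) / 2 + (d - (c + d) / 2) / (b - (a + b) / 2) * (t - (a + b) / 2)"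
      by (simp add: field_simps)
  qed
qed

definition maps_intervals :: "(real \<Rightarrow> real) \<Rightarrow> (real \<times> real) list \<Rightarrow> (real \<times> real) list \<Rightarrow> bool" where
  "maps_intervals g A B \<longleftrightarrow> length A = length B \<and>
     (\<forall>k<length A. fst (A ! k) < snd (A ! k) \<and> fst (B ! k) < snd (B ! k) \<and>
        maps_affinely g (fst (A ! k)) (snd (A ! k)) (fst (B ! k)) (snd (B ! k)))"

lemma maps_intervals_append:
  "maps_intervals g A B \<Longrightarrow> maps_intervals g A' B' \<Longrightarrow> maps_intervals g (A @ A') (B @ B')"
  unfolding maps_intervals_def by (auto simp: nth_append)

lemma maps_intervals_comp:
  "maps_intervals g A B \<Longrightarrow> maps_intervals h B C \<Longrightarrow> maps_intervals (h \<circ> g) A C"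
  unfolding maps_intervals_def using maps_affinely_comp by metis

lemma length_ivs [simp]: "length (ivs U a b) = nleaves U"
  by (induction U arbitrary: a b) auto

lemma maps_intervals_subdivision:
  "a < b \<Longrightarrow> c < d \<Longrightarrow> maps_affinely g a b c d \<Longrightarrow> maps_intervals g (ivs U a b) (ivs U c d)"
proof (induction U arbitrary: a b c d)
  case Leaf
  then show ?case by (simp add: maps_intervals_def)
next
  case (Node l r)
  then show ?case
    using maps_affinely_halves[OF Node.prems(1,3)]
    by (auto intro!: maps_intervals_append Node.IH)
qed

lemma maps_intervals_id: "maps_intervals (\<lambda>x. x) (ivs U 0 1) (ivs U 0 1)"
  by (rule maps_intervals_subdivision) (auto simp: maps_affinely_def)

lemma represents_if_maps_intervals:
  "S \<noteq> Leaf \<Longrightarrow> T \<noteq> Leaf \<Longrightarrow> maps_intervals g (ivs S 0 1) (ivs T 0 1) \<Longrightarrow> represents g S T"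
  unfolding represents_def rooted_tree_def maps_intervals_def maps_affinely_def by auto

lemma represents_maps_affinely:
  "represents g S T \<Longrightarrow> k < nleaves S \<Longrightarrow>
     maps_affinely g (fst (ivs S 0 1 ! k)) (snd (ivs S 0 1 ! k)) (fst (ivs T 0 1 ! k)) (snd (ivs T 0 1 ! k))"
  unfolding represents_def maps_affinely_def by blast

fun spine :: "tree list \<Rightarrow> tree" where
  "spine [] = Leaf"
| "spine (x # xs) = Node x (spine xs)"

text \<open>The subtrees hanging off the right spine of a tree sit over the intervals
  \<open>[spine_point j, spine_point (j + 1)]\<close>.\<close>

definition spine_point :: "nat \<Rightarrow> real" where
  "spine_point j = 1 - 1 / 2 ^ j"

lemma spine_point_0 [simp]: "spine_point 0 = 0"
  by (simp add: spine_point_def)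

lemma spine_point_Suc [simp]: "(spine_point j + 1) / 2 = spine_point (Suc j)"
  by (simp add: spine_point_def field_simps)

lemma spine_point_less_Suc: "spine_point j < spine_point (Suc j)"
  by (simp add: spine_point_def field_simps)

lemma spine_point_less_1: "spine_point j < 1"
  by (simp add: spine_point_def)

lemma spine_point_mono: "j \<le> i \<Longrightarrow> spine_point j \<le> spine_point i"
  by (simp add: spine_point_def field_simps)

lemma gI_spine_coordinates:
  assumes "0 \<le> u"
  shows "gI i (spine_point i + u / 2 ^ i) = spine_point i + g0 u / 2 ^ i"
proof (cases "u = 0")
  case False
  with assms have "0 < u / 2 ^ i" by simp
  then show ?thesis by (simp add: gI_def spine_point_def Let_def)
qed (simp add: g0_def gI_def spine_point_def)

lemma maps_affinely_gI:
  assumes "maps_affinely g0 u1 u2 v1 v2" and "0 \<le> u1" and "u1 < u2"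
  shows "maps_affinely (gI i) (spine_point i + u1 / 2 ^ i) (spine_point i + u2 / 2 ^ i)
                              (spine_point i + v1 / 2 ^ i) (spine_point i + v2 / 2 ^ i)"
  unfolding maps_affinely_def
proof (intro allI impI)
  fix t assume t: "spine_point i + u1 / 2 ^ i \<le> t \<and> t \<le> spine_point i + u2 / 2 ^ i"
  define u where "u = 2 ^ i * (t - spine_point i)"
  have tu: "t = spine_point i + u / 2 ^ i" by (simp add: u_def)
  have "u1 \<le> u" "u \<le> u2" using t by (simp_all add: tu field_simps)
  let ?s = "(v2 - v1) / (u2 - u1)"
  have "gI i t = spine_point i + g0 u / 2 ^ i"
    using gI_spine_coordinates[of u i] \<open>u1 \<le> u\<close> assms(2) by (simp add: tu)
  also have "g0 u = v1 + ?s * (u - u1)"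
    using assms(1) \<open>u1 \<le> u\<close> \<open>u \<le> u2\<close> unfolding maps_affinely_def by blast
  also have "spine_point i + (v1 + ?s * (u - u1)) / 2 ^ i =
             spine_point i + v1 / 2 ^ i + ?s * (t - (spine_point i + u1 / 2 ^ i))"
    using assms(3) by (simp add: tu field_simps)
  also have "?s = (spine_point i + v2 / 2 ^ i - (spine_point i + v1 / 2 ^ i)) /
                  (spine_point i + u2 / 2 ^ i - (spine_point i + u1 / 2 ^ i))"
    using assms(3) by (simp add: field_simps)
  finally show "gI i t = spine_point i + v1 / 2 ^ i +
      (spine_point i + v2 / 2 ^ i - (spine_point i + v1 / 2 ^ i)) /
      (spine_point i + u2 / 2 ^ i - (spine_point i + u1 / 2 ^ i)) * (t - (spine_point i + u1 / 2 ^ i))" .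
qed

lemma gI_maps_affinely:
  shows "maps_affinely (gI i) (spine_point i) ((spine_point i + spine_point (Suc i)) / 2)
                              (spine_point i) (spine_point (Suc i))"
    and "maps_affinely (gI i) ((spine_point i + spine_point (Suc i)) / 2) (spine_point (Suc i))
                              (spine_point (Suc i)) (spine_point (Suc (Suc i)))"
    and "maps_affinely (gI i) (spine_point (Suc i)) 1 (spine_point (Suc (Suc i))) 1"
proof -
  have g0: "maps_affinely g0 0 (1/4) 0 (1/2)" "maps_affinely g0 (1/4) (1/2) (1/2) (3/4)"
    "maps_affinely g0 (1/2) 1 (3/4) 1"
    by (auto simp: maps_affinely_def g0_def field_simps)
  have eqs: "spine_point i + 0 / 2 ^ i = spine_point i"
    "spine_point i + 1 / 4 / 2 ^ i = (spine_point i + spine_point (Suc i)) / 2"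
    "spine_point i + 1 / 2 / 2 ^ i = spine_point (Suc i)"
    "spine_point i + 3 / 4 / 2 ^ i = spine_point (Suc (Suc i))"
    "spine_point i + 1 / 2 ^ i = 1"
    by (simp_all add: spine_point_def field_simps)
  show "maps_affinely (gI i) (spine_point i) ((spine_point i + spine_point (Suc i)) / 2)
                              (spine_point i) (spine_point (Suc i))"
    using maps_affinely_gI[OF g0(1), of i] unfolding eqs by simp
  show "maps_affinely (gI i) ((spine_point i + spine_point (Suc i)) / 2) (spine_point (Suc i))
                              (spine_point (Suc i)) (spine_point (Suc (Suc i)))"
    using maps_affinely_gI[OF g0(2), of i] unfolding eqs by simp
  show "maps_affinely (gI i) (spine_point (Suc i)) 1 (spine_point (Suc (Suc i))) 1"
    using maps_affinely_gI[OF g0(3), of i] unfolding eqs by simp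
qed

abbreviation vine :: "nat \<Rightarrow> tree" where
  "vine n \<equiv> spine (replicate n Leaf)"

lemma maps_intervals_gI_spine:
  "j + length P = i \<Longrightarrow>
     maps_intervals (gI i) (ivs (spine (P @ Node x y # R)) (spine_point j) 1)
                           (ivs (spine (P @ x # y # R)) (spine_point j) 1)"
proof (induction P arbitrary: j)
  case Nil
  let ?m = "(spine_point i + spine_point (Suc i)) / 2"
  have "spine_point i < ?m" "?m < spine_point (Suc i)"
    using spine_point_less_Suc[of i] by simp_all
  then have "maps_intervals (gI i) (ivs x (spine_point i) ?m @ ivs y ?m (spine_point (Suc i)) @
                                     ivs (spine R) (spine_point (Suc i)) 1)
                                   (ivs x (spine_point i) (spine_point (Suc i)) @
                                     ivs y (spine_point (Suc i)) (spine_point (Suc (Suc i))) @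
                                     ivs (spine R) (spine_point (Suc (Suc i))) 1)"
    by (intro maps_intervals_append maps_intervals_subdivision gI_maps_affinely
          spine_point_less_Suc spine_point_less_1)
  with Nil show ?case by simp
next
  case (Cons L P)
  have "maps_intervals (gI i) (ivs L (spine_point j) (spine_point (Suc j)))
                              (ivs L (spine_point j) (spine_point (Suc j)))"
  proof (intro maps_intervals_subdivision maps_affinely_identity spine_point_less_Suc)
    fix t assume "t \<le> spine_point (Suc j)"
    also have "spine_point (Suc j) \<le> spine_point i"
      using Cons.prems by (intro spine_point_mono) simp
    finally show "gI i t = t" by (simp add: gI_def spine_point_def Let_def)
  qed
  moreover have "maps_intervals (gI i) (ivs (spine (P @ Node x y # R)) (spine_point (Suc j)) 1)
                                       (ivs (spine (P @ x # y # R)) (spine_point (Suc j)) 1)"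
    using Cons by simp
  ultimately show ?case by (simp add: maps_intervals_append)
qed

text \<open>\<open>gI i\<close> realises a rotation at the \<open>i\<close>-th vertex of the right spine.\<close>

lemma maps_intervals_gI_rotation:
  assumes "i + 2 \<le> length L"
  shows "maps_intervals (gI i) (ivs (spine (take i L @ [Node (L ! i) (L ! (i + 1))] @ drop (i + 2) L)) 0 1)
                               (ivs (spine L) 0 1)"
proof -
  have "drop i L = L ! i # L ! (i + 1) # drop (i + 2) L"
    using Cons_nth_drop_Suc[of i L] Cons_nth_drop_Suc[of "Suc i" L] assms by simp
  then have "L = take i L @ L ! i # L ! (i + 1) # drop (i + 2) L"
    using append_take_drop_id[of i L] by simp
  moreover have "0 + length (take i L) = i" using assms by simp
  ultimately show ?thesis
    using maps_intervals_gI_spine[of 0 "take i L" i "L ! i" "L ! (i + 1)" "drop (i + 2) L"] by simp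
qed

fun left_comb :: "nat \<Rightarrow> tree list \<Rightarrow> tree" where
  "left_comb 0 xs = hd xs"
| "left_comb (Suc m) xs = Node (left_comb m xs) (xs ! Suc m)"

lemma left_comb_Node: "left_comb m (Node x y # zs) = left_comb (Suc m) (x # y # zs)"
  by (induction m) auto

lemma maps_intervals_gI_power:
  "i + r + 1 \<le> length L \<Longrightarrow>
     maps_intervals (gI i ^^ r) (ivs (spine (take i L @ [left_comb r (drop i L)] @ drop (i + r + 1) L)) 0 1)
                                (ivs (spine L) 0 1)"
proof (induction r arbitrary: L)
  case 0
  then have "take i L @ [left_comb 0 (drop i L)] @ drop (i + 0 + 1) L = L"
    by (simp add: hd_drop_conv_nth id_take_nth_drop[symmetric])
  then show ?case using maps_intervals_id by simp
next
  case (Suc r)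
  define L' where "L' = take i L @ [Node (L ! i) (L ! (i + 1))] @ drop (i + 2) L"
  have "drop i L = L ! i # L ! (i + 1) # drop (i + 2) L"
    using Cons_nth_drop_Suc[of i L] Cons_nth_drop_Suc[of "Suc i" L] Suc.prems by simp
  then have eqs: "take i L' = take i L" "left_comb r (drop i L') = left_comb (Suc r) (drop i L)"
    "drop (i + r + 1) L' = drop (i + Suc r + 1) L"
    using Suc.prems by (simp_all add: L'_def left_comb_Node ac_simps)
  have "i + r + 1 \<le> length L'" using Suc.prems by (simp add: L'_def)
  note IH = Suc.IH[OF this, unfolded eqs]
  have "maps_intervals (gI i) (ivs (spine L') 0 1) (ivs (spine L) 0 1)"
    using maps_intervals_gI_rotation[of i L] Suc.prems by (simp add: L'_def)
  from maps_intervals_comp[OF IH this] show ?case by (simp only: funpow.simps(2))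
qed

text \<open>The subtrees hanging off the right spine of the source tree of the diagram of \<open>posI ps\<close>
  whose target is \<open>vine K\<close>.\<close>

fun source_forest :: "(nat \<times> nat) list \<Rightarrow> nat \<Rightarrow> tree list" where
  "source_forest [] K = replicate K Leaf"
| "source_forest ((i, r) # ps) K =
     (let L = source_forest ps K in take i L @ [left_comb r (drop i L)] @ drop (i + r + 1) L)"

lemma maps_intervals_posI_source_forest:
  "N_rec ps \<le> K \<Longrightarrow>
     length (source_forest ps K) = K - exponent_sum ps \<and>
     maps_intervals (posI ps) (ivs (spine (source_forest ps K)) 0 1) (ivs (vine K) 0 1)"
proof (induction ps)
  case Nil
  then show ?case using maps_intervals_id by simp
next
  case (Cons p ps)
  obtain i r where p: "p = (i, r)" by fastforce
  define L where "L = source_forest ps K"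
  have "N_rec ps \<le> K" "i + r + exponent_sum ps + 1 \<le> K" using Cons.prems p by auto
  with Cons.IH have IH: "length L = K - exponent_sum ps"
    "maps_intervals (posI ps) (ivs (spine L) 0 1) (ivs (vine K) 0 1)"
    by (auto simp: L_def)
  with \<open>i + r + exponent_sum ps + 1 \<le> K\<close> have "i + r + 1 \<le> length L" by simp
  let ?L' = "take i L @ [left_comb r (drop i L)] @ drop (i + r + 1) L"
  have "source_forest (p # ps) K = ?L'" by (simp add: p L_def Let_def)
  moreover have "posI (p # ps) = posI ps \<circ> (gI i ^^ r)" by (simp add: p)
  moreover have "length ?L' = K - exponent_sum (p # ps)"
    using IH(1) \<open>i + r + 1 \<le> length L\<close> by (simp add: p)
  moreover have "maps_intervals (posI ps \<circ> (gI i ^^ r)) (ivs (spine ?L') 0 1)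
                                                        (ivs (vine K) 0 1)"
    by (rule maps_intervals_comp[OF maps_intervals_gI_power[OF \<open>i + r + 1 \<le> length L\<close>] IH(2)])
  ultimately show ?case by (simp only:)
qed

definition dyadic :: "real \<Rightarrow> real \<Rightarrow> bool" where
  "dyadic a b \<longleftrightarrow> (\<exists>k n::nat. a = real k / 2 ^ n \<and> b = (real k + 1) / 2 ^ n)"

lemma dyadic_0_1: "dyadic 0 1"
  unfolding dyadic_def by (rule exI[of _ 0], rule exI[of _ 0]) simp

lemma dyadic_less: "dyadic a b \<Longrightarrow> a < b"
  unfolding dyadic_def by (auto simp: divide_strict_right_mono)

lemma dyadic_halves: "dyadic a b \<Longrightarrow> dyadic a ((a + b) / 2) \<and> dyadic ((a + b) / 2) b"
proof -
  assume "dyadic a b"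
  then obtain k n where kn: "a = real k / 2 ^ n" "b = (real k + 1) / 2 ^ n"
    unfolding dyadic_def by auto
  have "a = real (2 * k) / 2 ^ Suc n" "(a + b) / 2 = (real (2 * k) + 1) / 2 ^ Suc n"
    "(a + b) / 2 = real (2 * k + 1) / 2 ^ Suc n" "b = (real (2 * k + 1) + 1) / 2 ^ Suc n"
    unfolding kn by (simp_all add: divide_simps)
  then show ?thesis unfolding dyadic_def by blast
qed

lemma odd_mult_power2_eq:
  assumes "(2 * k + 1) * 2 ^ n' = (2 * k' + 1) * (2::nat) ^ n" and "n \<le> n'"
  shows "n = n' \<and> k = k'"
proof -
  have "2 ^ (n' - n) * 2 ^ n = (2::nat) ^ n'"
    using assms(2) by (simp flip: power_add)
  then have "(2 * k + 1) * 2 ^ (n' - n) * 2 ^ n = (2 * k' + 1) * (2::nat) ^ n"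
    using assms(1) by (metis mult.assoc)
  then have "(2 * k + 1) * 2 ^ (n' - n) = 2 * k' + 1"
    by (metis mult_right_cancel power_not_zero zero_neq_numeral)
  moreover have "n' - n = 0"
  proof (rule ccontr)
    assume "n' - n \<noteq> 0"
    then have "even ((2 * k + 1) * (2::nat) ^ (n' - n))" by simp
    with \<open>(2 * k + 1) * 2 ^ (n' - n) = 2 * k' + 1\<close> show False by simp
  qed
  ultimately show ?thesis using assms(2) by simp
qed

lemma dyadic_same_midpoint: "dyadic a b \<Longrightarrow> dyadic c d \<Longrightarrow> a + b = c + d \<Longrightarrow> a = c \<and> b = d"
proof -
  assume "dyadic a b" "dyadic c d" and "a + b = c + d"
  then obtain k n k' n' where kn: "a = real k / 2 ^ n" "b = (real k + 1) / 2 ^ n"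
    and kn': "c = real k' / 2 ^ n'" "d = (real k' + 1) / 2 ^ n'" unfolding dyadic_def by auto
  have "(2 * real k + 1) / 2 ^ n = (2 * real k' + 1) / 2 ^ n'"
    using \<open>a + b = c + d\<close> unfolding kn kn' by (simp add: add_divide_distrib)
  then have "(2 * real k + 1) * 2 ^ n' = (2 * real k' + 1) * 2 ^ n"
    by (simp add: divide_simps)
  then have "(2 * k + 1) * 2 ^ n' = (2 * k' + 1) * (2::nat) ^ n"
    by (metis (mono_tags) of_nat_eq_iff of_nat_mult of_nat_add of_nat_1 of_nat_numeral of_nat_power)
  then have "n = n' \<and> k = k'"
    using odd_mult_power2_eq[of k n' k' n] odd_mult_power2_eq[of k' n k n'] by (cases "n \<le> n'") auto
  then show ?thesis unfolding kn kn' by simp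
qed

lemma dyadic_leaves: "dyadic a b \<Longrightarrow> x \<in> set (ivs U a b) \<Longrightarrow> dyadic (fst x) (snd x)"
  by (induction U arbitrary: a b) (auto dest: dyadic_halves)

lemma ivs_leaf_bounds:
  "a < b \<Longrightarrow> x \<in> set (ivs U a b) \<Longrightarrow> a \<le> fst x \<and> fst x < snd x \<and> snd x \<le> b \<and> snd x - fst x \<le> b - a"
proof (induction U arbitrary: a b)
  case (Node l r)
  then show ?case
    using Node.IH(1)[of a "(a + b) / 2"] Node.IH(2)[of "(a + b) / 2" b] by fastforce
qed simp

lemma ivs_leaf_short: "a < b \<Longrightarrow> U \<noteq> Leaf \<Longrightarrow> x \<in> set (ivs U a b) \<Longrightarrow> snd x - fst x \<le> (b - a) / 2"
  by (cases U) (auto dest: ivs_leaf_bounds[rotated])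

lemma ivs_not_Nil: "ivs U a b \<noteq> []"
  by (induction U arbitrary: a b) auto

lemma snd_last_ivs: "snd (last (ivs U a b)) = b"
  by (induction U arbitrary: a b) (auto simp: ivs_not_Nil)

lemma nleaves_pos: "1 \<le> nleaves U"
  by (induction U) auto

lemma nleaves_eq_carets: "nleaves U = carets U + 1"
  by (induction U) auto

lemma cherries_Node:
  "cherries (Node l r) k = (if l = Leaf \<and> r = Leaf then {k} else cherries l k \<union> cherries r (k + nleaves l))"
  by (cases l; cases r) auto

lemma cherries_bounds: "j \<in> cherries U k \<Longrightarrow> k \<le> j \<and> j + 2 \<le> k + nleaves U"
proof (induction U arbitrary: k)
  case (Node l r)
  then show ?case
    using nleaves_pos[of l] nleaves_pos[of r] by (fastforce simp: cherries_Node split: if_splits)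
qed simp

text \<open>The intervals that can be leaves of the source tree of a diagram of \<open>g\<close>.\<close>

definition dyadic_affine :: "(real \<Rightarrow> real) \<Rightarrow> real \<Rightarrow> real \<Rightarrow> bool" where
  "dyadic_affine g a b \<longleftrightarrow> dyadic a b \<and> (\<exists>c d. dyadic c d \<and> maps_affinely g a b c d)"

lemma dyadic_affine_halves:
  "dyadic_affine g a b \<Longrightarrow> dyadic_affine g a ((a + b) / 2) \<and> dyadic_affine g ((a + b) / 2) b"
  unfolding dyadic_affine_def
  using dyadic_halves maps_affinely_halves dyadic_less by meson

lemma represents_leaves_dyadic_affine:
  assumes "represents g S T" and "x \<in> set (ivs S 0 1)"
  shows "dyadic_affine g (fst x) (snd x)"
proof -
  obtain k where k: "k < nleaves S" "x = ivs S 0 1 ! k"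
    using assms(2) by (metis in_set_conv_nth length_ivs)
  then have "k < nleaves T" using assms(1) by (simp add: represents_def)
  then have "dyadic (fst (ivs T 0 1 ! k)) (snd (ivs T 0 1 ! k))"
    using dyadic_leaves[OF dyadic_0_1 nth_mem[of k "ivs T 0 1"]] by simp
  moreover have "dyadic (fst x) (snd x)" using dyadic_leaves[OF dyadic_0_1 assms(2)] .
  ultimately show ?thesis
    using represents_maps_affinely[OF assms(1) k(1)] k(2) unfolding dyadic_affine_def by blast
qed

text \<open>The number of leaves of \<open>U\<close> after collapsing each maximal subtree over a
  \<open>dyadic_affine\<close> interval. The collapsed tree is the same for all \<open>U\<close> whose leaves are
  \<open>dyadic_affine\<close>, and for the source tree of a reduced diagram nothing is collapsed.\<close>

fun pruned_leaves :: "(real \<Rightarrow> real) \<Rightarrow> tree \<Rightarrow> real \<Rightarrow> real \<Rightarrow> nat" where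
  "pruned_leaves g Leaf a b = 1"
| "pruned_leaves g (Node l r) a b =
     (if dyadic_affine g a b then 1
      else pruned_leaves g l a ((a + b) / 2) + pruned_leaves g r ((a + b) / 2) b)"

lemma pruned_leaves_eq:
  "\<forall>x\<in>set (ivs U a b). dyadic_affine g (fst x) (snd x) \<Longrightarrow>
   \<forall>x\<in>set (ivs U' a b). dyadic_affine g (fst x) (snd x) \<Longrightarrow>
     pruned_leaves g U a b = pruned_leaves g U' a b"
proof (induction U arbitrary: U' a b)
  case Leaf
  then show ?case by (cases U') auto
next
  case (Node l r)
  show ?case
  proof (cases U')
    case (Node l' r')
    have "pruned_leaves g l a ((a + b) / 2) = pruned_leaves g l' a ((a + b) / 2)"
      by (rule Node.IH(1)) (use Node.prems \<open>U' = Node l' r'\<close> in auto)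
    moreover have "pruned_leaves g r ((a + b) / 2) b = pruned_leaves g r' ((a + b) / 2) b"
      by (rule Node.IH(2)) (use Node.prems \<open>U' = Node l' r'\<close> in auto)
    ultimately show ?thesis using Node by simp
  qed (use Node.prems in auto)
qed

definition affine_cherry :: "(real \<Rightarrow> real) \<Rightarrow> tree \<Rightarrow> real \<Rightarrow> real \<Rightarrow> nat \<Rightarrow> nat \<Rightarrow> bool" where
  "affine_cherry g U a b k j \<longleftrightarrow> j \<in> cherries U k \<and>
     (\<exists>p q. ivs U a b ! (j - k) = (p, (p + q) / 2) \<and> ivs U a b ! (j - k + 1) = ((p + q) / 2, q) \<and>
            dyadic_affine g p q)"

lemma affine_cherry_Node_left:
  assumes "affine_cherry g l a ((a + b) / 2) k j" and "\<not> (l = Leaf \<and> r = Leaf)"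
  shows "affine_cherry g (Node l r) a b k j"
proof -
  have "j \<in> cherries l k" using assms(1) by (simp add: affine_cherry_def)
  then have "j - k + 1 < nleaves l" using cherries_bounds by fastforce
  with assms show ?thesis by (auto simp: affine_cherry_def cherries_Node nth_append)
qed

lemma affine_cherry_Node_right:
  assumes "affine_cherry g r ((a + b) / 2) b (k + nleaves l) j" and "\<not> (l = Leaf \<and> r = Leaf)"
  shows "affine_cherry g (Node l r) a b k j"
proof -
  have "j \<in> cherries r (k + nleaves l)" using assms(1) by (simp add: affine_cherry_def)
  then have "k + nleaves l \<le> j" using cherries_bounds by blast
  then have "j - k = (j - (k + nleaves l)) + nleaves l"
    "j - k + 1 = (j - (k + nleaves l) + 1) + nleaves l" by simp_all
  with assms show ?thesis by (auto simp: affine_cherry_def cherries_Node nth_append)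
qed

lemma affine_cherry_exists:
  "dyadic_affine g a b \<Longrightarrow> U \<noteq> Leaf \<Longrightarrow> \<exists>j. affine_cherry g U a b k j"
proof (induction U arbitrary: a b k)
  case (Node l r)
  note halves = dyadic_affine_halves[OF Node.prems(1)]
  consider "l = Leaf" "r = Leaf" | "l \<noteq> Leaf" | "l = Leaf" "r \<noteq> Leaf" by blast
  then show ?case
  proof cases
    case 1
    then have "affine_cherry g (Node l r) a b k k"
      using Node.prems(1) by (simp add: affine_cherry_def)
    then show ?thesis by blast
  next
    case 2
    then show ?thesis using Node.IH(1) halves affine_cherry_Node_left by blast
  next
    case 3
    then show ?thesis using Node.IH(2) halves affine_cherry_Node_right by blast
  qed
qed simp

lemma affine_cherry_if_pruned:
  "dyadic a b \<Longrightarrow> \<forall>x\<in>set (ivs U a b). dyadic_affine g (fst x) (snd x) \<Longrightarrow>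
     pruned_leaves g U a b \<noteq> nleaves U \<Longrightarrow> \<exists>j. affine_cherry g U a b k j"
proof (induction U arbitrary: a b k)
  case (Node l r)
  show ?case
  proof (cases "dyadic_affine g a b")
    case True
    then show ?thesis using affine_cherry_exists by blast
  next
    case False
    note halves = dyadic_halves[OF Node.prems(1)]
    from False Node.prems(3) consider
      "pruned_leaves g l a ((a + b) / 2) \<noteq> nleaves l" |
      "pruned_leaves g r ((a + b) / 2) b \<noteq> nleaves r" by force
    then show ?thesis
    proof cases
      case 1
      then have "\<not> (l = Leaf \<and> r = Leaf)" by auto
      with 1 show ?thesis
        using Node.IH(1) halves Node.prems(2) affine_cherry_Node_left by (metis Un_iff ivs.simps(2) set_append)
    next
      case 2
      then have "\<not> (l = Leaf \<and> r = Leaf)" by auto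
      with 2 show ?thesis
        using Node.IH(2) halves Node.prems(2) affine_cherry_Node_right by (metis Un_iff ivs.simps(2) set_append)
    qed
  qed
qed simp

lemma Leaf_if_dyadic_halves_straddle:
  assumes "dyadic a b" and "dyadic c d" and "m = (c + d) / 2"
    and l: "last (ivs l a ((a + b) / 2)) = (c, m)" and r: "hd (ivs r ((a + b) / 2) b) = (m, d)"
  shows "l = Leaf \<and> r = Leaf"
proof -
  have "m = (a + b) / 2" using snd_last_ivs[of l a "(a + b) / 2"] l by simp
  then have "c = a" "d = b" using dyadic_same_midpoint[OF assms(1,2)] assms(3) by auto
  have "a < b" using dyadic_less[OF assms(1)] .
  then have "a < m" "m < b" using \<open>m = (a + b) / 2\<close> by simp_all
  have "(c, m) \<in> set (ivs l a m)" "(m, d) \<in> set (ivs r m b)"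
    using l r last_in_set[OF ivs_not_Nil] hd_in_set[OF ivs_not_Nil] \<open>m = (a + b) / 2\<close> by metis+
  have "l = Leaf"
  proof (rule ccontr)
    assume "l \<noteq> Leaf"
    from ivs_leaf_short[OF \<open>a < m\<close> this \<open>(c, m) \<in> set (ivs l a m)\<close>] show False
      using \<open>c = a\<close> \<open>a < m\<close> by simp
  qed
  moreover have "r = Leaf"
  proof (rule ccontr)
    assume "r \<noteq> Leaf"
    from ivs_leaf_short[OF \<open>m < b\<close> this \<open>(m, d) \<in> set (ivs r m b)\<close>] show False
      using \<open>d = b\<close> \<open>m < b\<close> by simp
  qed
  ultimately show ?thesis ..
qed

lemma cherry_if_dyadic_halves:
  "dyadic a b \<Longrightarrow> i + 1 < nleaves T \<Longrightarrow> ivs T a b ! i = (c, m) \<Longrightarrow> ivs T a b ! (i + 1) = (m, d) \<Longrightarrow>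
     dyadic c d \<Longrightarrow> m = (c + d) / 2 \<Longrightarrow> i + k \<in> cherries T k"
proof (induction T arbitrary: a b i k)
  case (Node l r)
  define mid where "mid = (a + b) / 2"
  note halves = dyadic_halves[OF Node.prems(1), folded mid_def]
  have ivs: "ivs (Node l r) a b = ivs l a mid @ ivs r mid b" by (simp add: mid_def)
  show ?case
  proof (cases "l = Leaf \<and> r = Leaf")
    case True
    then show ?thesis using Node.prems(2) by (simp add: cherries_Node)
  next
    case False
    then have cherries: "cherries (Node l r) k = cherries l k \<union> cherries r (k + nleaves l)"
      by (simp add: cherries_Node)
    consider (left) "i + 1 < nleaves l" | (right) "nleaves l \<le> i" | (at_mid) "i + 1 = nleaves l"
      by linarith
    then show ?thesis
    proof cases
      case left
      with Node.prems(3,4) have "ivs l a mid ! i = (c, m)" "ivs l a mid ! (i + 1) = (m, d)"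
        by (simp_all add: mid_def nth_append)
      with Node.IH(1) halves left Node.prems(5,6) have "i + k \<in> cherries l k" by blast
      then show ?thesis by (simp add: cherries)
    next
      case right
      with Node.prems(2-4) have "i - nleaves l + 1 < nleaves r"
        "ivs r mid b ! (i - nleaves l) = (c, m)" "ivs r mid b ! (i - nleaves l + 1) = (m, d)"
        by (simp_all add: mid_def nth_append Suc_diff_le)
      with Node.IH(2) halves Node.prems(5,6)
      have "(i - nleaves l) + (k + nleaves l) \<in> cherries r (k + nleaves l)" by blast
      with right show ?thesis by (simp add: cherries)
    next
      case at_mid
      with Node.prems(3,4) have "last (ivs l a mid) = (c, m)" "hd (ivs r mid b) = (m, d)"
        by (simp_all add: mid_def nth_append last_conv_nth hd_conv_nth ivs_not_Nil flip: at_mid)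
      then have "l = Leaf \<and> r = Leaf"
        using Leaf_if_dyadic_halves_straddle[OF Node.prems(1,5,6)] by (simp add: mid_def)
      with False show ?thesis by blast
    qed
  qed
qed simp

lemma maps_affinely_midpoint:
  assumes "a < b" and "maps_affinely g a b c d"
  shows "g ((a + b) / 2) = (c + d) / 2"
proof -
  have "a \<le> (a + b) / 2" "(a + b) / 2 \<le> b" using \<open>a < b\<close> by simp_all
  with assms(2) have "g ((a + b) / 2) = c + (d - c) / (b - a) * ((a + b) / 2 - a)"
    unfolding maps_affinely_def by blast
  also have "(a + b) / 2 - a = (b - a) / 2" by simp
  also have "(d - c) / (b - a) * ((b - a) / 2) = (d - c) / 2" using \<open>a < b\<close> by simp
  also have "c + (d - c) / 2 = (c + d) / 2" by (simp add: field_simps)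
  finally show ?thesis .
qed

lemma represents_cherry_image:
  assumes "represents g S T" and "j + 1 < nleaves S"
    and "ivs S 0 1 ! j = (p, (p + q) / 2)" and "ivs S 0 1 ! (j + 1) = ((p + q) / 2, q)"
    and "maps_affinely g p q c d" and "p < q"
  shows "ivs T 0 1 ! j = (c, (c + d) / 2) \<and> ivs T 0 1 ! (j + 1) = ((c + d) / 2, d)"
proof -
  have "g p = c" "g q = d" using maps_affinely_endpoints[OF assms(6,5)] by auto
  moreover have "g ((p + q) / 2) = (c + d) / 2" using maps_affinely_midpoint[OF assms(6,5)] .
  moreover have "g p = fst (ivs T 0 1 ! j) \<and> g ((p + q) / 2) = snd (ivs T 0 1 ! j)"
    using maps_affinely_endpoints[OF _ represents_maps_affinely[OF assms(1), of j]] assms by simp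
  moreover have "g ((p + q) / 2) = fst (ivs T 0 1 ! (j + 1)) \<and> g q = snd (ivs T 0 1 ! (j + 1))"
    using maps_affinely_endpoints[OF _ represents_maps_affinely[OF assms(1), of "j + 1"]] assms by simp
  ultimately show ?thesis by (metis prod.collapse)
qed

lemma reduced_pruned_leaves:
  assumes "represents g S T" and "reduced S T"
  shows "pruned_leaves g S 0 1 = nleaves S"
proof (rule ccontr)
  assume "pruned_leaves g S 0 1 \<noteq> nleaves S"
  then obtain j where "affine_cherry g S 0 1 0 j"
    using affine_cherry_if_pruned[OF dyadic_0_1] represents_leaves_dyadic_affine[OF assms(1)] by blast
  then obtain p q c d where j: "j \<in> cherries S 0" "ivs S 0 1 ! j = (p, (p + q) / 2)"
    "ivs S 0 1 ! (j + 1) = ((p + q) / 2, q)" "dyadic p q" "dyadic c d" "maps_affinely g p q c d"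
    unfolding affine_cherry_def dyadic_affine_def by auto
  have "j + 1 < nleaves S" using cherries_bounds[OF j(1)] by simp
  then have "ivs T 0 1 ! j = (c, (c + d) / 2)" "ivs T 0 1 ! (j + 1) = ((c + d) / 2, d)"
    using represents_cherry_image[OF assms(1) _ j(2,3,6) dyadic_less[OF j(4)]] by blast+
  moreover have "j + 1 < nleaves T"
    using assms(1) \<open>j + 1 < nleaves S\<close> by (simp add: represents_def)
  ultimately have "j + 0 \<in> cherries T 0"
    using cherry_if_dyadic_halves[OF dyadic_0_1 _ _ _ j(5) refl] by blast
  with j(1) assms(2) show False by (auto simp: reduced_def)
qed

lemma reduced_diagrams_carets_eq:
  assumes "represents g S T" "reduced S T" "represents g S' T'" "reduced S' T'"
  shows "carets S = carets S' \<and> carets T = carets S'"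
proof -
  have "nleaves S = pruned_leaves g S 0 1" using reduced_pruned_leaves assms(1,2) by simp
  also have "\<dots> = pruned_leaves g S' 0 1"
    using pruned_leaves_eq represents_leaves_dyadic_affine assms(1,3) by blast
  also have "\<dots> = nleaves S'" using reduced_pruned_leaves assms(3,4) by simp
  finally show ?thesis
    using assms(1) nleaves_eq_carets[of S] nleaves_eq_carets[of S'] nleaves_eq_carets[of T]
    by (simp add: represents_def)
qed

lemma left_comb_not_Leaf: "1 \<le> r \<Longrightarrow> left_comb r xs \<noteq> Leaf"
  by (cases r) auto

lemma last_source_forest_not_Leaf:
  "ps \<noteq> [] \<Longrightarrow> \<forall>p\<in>set ps. 1 \<le> snd p \<Longrightarrow> last (source_forest ps (N_rec ps)) \<noteq> Leaf"
proof (induction ps)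
  case (Cons p ps)
  obtain i r where p: "p = (i, r)" by fastforce
  define K where "K = N_rec (p # ps)"
  define L where "L = source_forest ps K"
  have "N_rec ps \<le> K" "i + r + exponent_sum ps + 1 \<le> K" by (auto simp: K_def p)
  then have len: "length L = K - exponent_sum ps"
    using maps_intervals_posI_source_forest by (simp add: L_def)
  have forest: "source_forest (p # ps) K = take i L @ [left_comb r (drop i L)] @ drop (i + r + 1) L"
    by (simp add: p L_def Let_def)
  show ?case
  proof (cases "length L = i + r + 1")
    case True
    then show ?thesis
      unfolding K_def[symmetric] forest using Cons.prems(2) left_comb_not_Leaf by (simp add: p)
  next
    case False
    with len \<open>i + r + exponent_sum ps + 1 \<le> K\<close> have "i + r + 1 < length L" by simp
    with len have "K = N_rec ps" "ps \<noteq> []" by (auto simp: K_def p)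
    then have "last L \<noteq> Leaf" using Cons by (simp add: L_def)
    with \<open>i + r + 1 < length L\<close> show ?thesis
      unfolding K_def[symmetric] forest by simp
  qed
qed simp

lemma nleaves_vine: "nleaves (vine n) = n + 1"
  by (induction n) auto

lemma cherries_vine: "cherries (vine n) k \<subseteq> {k + n - 1}"
proof (induction n arbitrary: k)
  case (Suc n)
  then show ?case using Suc.IH[of "Suc k"] by (cases n) (auto simp: cherries_Node)
qed simp

lemma nleaves_spine_Cons: "2 \<le> nleaves (spine (x # xs))"
  using nleaves_pos[of x] nleaves_pos[of "spine xs"] by simp

lemma spine_last_leaf_pair_not_cherry:
  "Ls \<noteq> [] \<Longrightarrow> last Ls \<noteq> Leaf \<Longrightarrow> k + nleaves (spine Ls) - 2 \<notin> cherries (spine Ls) k"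
proof (induction Ls arbitrary: k)
  case (Cons x xs)
  show ?case
  proof (cases xs)
    case Nil
    with Cons.prems have "cherries (spine (x # xs)) k = cherries x k" by (simp add: cherries_Node)
    with Nil show ?thesis using cherries_bounds[of "k + nleaves x - 1" x k] nleaves_pos[of x] by auto
  next
    case (Cons y ys)
    then have "cherries (spine (x # xs)) k = cherries x k \<union> cherries (spine xs) (k + nleaves x)"
      by (simp add: cherries_Node)
    moreover have "k + nleaves (spine (x # xs)) - 2 \<notin> cherries x k"
      using cherries_bounds[of _ x k] nleaves_spine_Cons[of y ys] Cons by force
    moreover have "k + nleaves (spine (x # xs)) - 2 \<notin> cherries (spine xs) (k + nleaves x)"
      using Cons.IH[of "k + nleaves x"] Cons.prems Cons nleaves_spine_Cons[of y ys]
      by (simp add: add.assoc)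
    ultimately show ?thesis by blast
  qed
qed simp

text \<open>Only the bottom caret of the vine is a cherry, and the matching pair of leaves of the
  source is not a caret because the last tree of the source forest is not a leaf.\<close>

lemma reduced_diagram_posI:
  assumes "ps \<noteq> []" and "\<forall>p\<in>set ps. 1 \<le> snd p"
  defines "S \<equiv> spine (source_forest ps (N_rec ps))" and "T \<equiv> vine (N_rec ps)"
  shows "represents (posI ps) S T \<and> reduced S T \<and> carets T = N_rec ps"
proof -
  define L where "L = source_forest ps (N_rec ps)"
  have "exponent_sum ps < N_rec ps" using exponent_sum_less_N_rec[OF assms(1)] .
  moreover have forest: "length L = N_rec ps - exponent_sum ps"
    "maps_intervals (posI ps) (ivs S 0 1) (ivs T 0 1)"
    using maps_intervals_posI_source_forest[of ps "N_rec ps"] by (simp_all add: L_def S_def T_def)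
  ultimately have "L \<noteq> []" by auto
  have "nleaves S = N_rec ps + 1"
    using forest(2) nleaves_vine[of "N_rec ps"] by (simp add: maps_intervals_def T_def)
  have "represents (posI ps) S T"
  proof (rule represents_if_maps_intervals[OF _ _ forest(2)])
    show "S \<noteq> Leaf" using \<open>L \<noteq> []\<close> by (cases L) (simp_all add: S_def L_def)
    show "T \<noteq> Leaf" using \<open>exponent_sum ps < N_rec ps\<close> by (cases "N_rec ps") (simp_all add: T_def)
  qed
  moreover have "N_rec ps - 1 \<notin> cherries S 0"
    using spine_last_leaf_pair_not_cherry[OF \<open>L \<noteq> []\<close>, of 0] \<open>nleaves S = N_rec ps + 1\<close>
      last_source_forest_not_Leaf[OF assms(1,2), folded L_def]
    by (simp add: S_def L_def)
  then have "reduced S T"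
    using cherries_vine[of "N_rec ps" 0] by (auto simp: reduced_def T_def)
  moreover have "carets T = N_rec ps"
    using nleaves_vine[of "N_rec ps"] nleaves_eq_carets[of T] by (simp add: T_def)
  ultimately show ?thesis by blast
qed

lemma reduced_diagrams_posI:
  assumes "pos_nf ps"
  shows "(\<exists>S T. represents (posI ps) S T \<and> reduced S T) \<and>
         (\<forall>S T. represents (posI ps) S T \<and> reduced S T \<longrightarrow> carets S = Nval ps \<and> carets T = Nval ps)"
proof -
  have ps: "ps \<noteq> []" "\<forall>p\<in>set ps. 1 \<le> snd p" using assms by (auto simp: pos_nf_def)
  obtain S0 T0 where diagram: "represents (posI ps) S0 T0" "reduced S0 T0" "carets T0 = Nval ps"
    using reduced_diagram_posI[OF ps] Nval_eq_N_rec[OF ps(1)] by force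
  then have "carets S0 = Nval ps"
    using reduced_diagrams_carets_eq[OF diagram(1,2) diagram(1,2)] by simp
  with diagram show ?thesis
    using reduced_diagrams_carets_eq[OF _ _ diagram(1,2)] by metis
qed

theorem proposition2:
  shows "(\<forall>ps. pos_nf ps \<longrightarrow>
            ((\<exists>S T. represents (posI ps) S T \<and> reduced S T) \<and>
             (\<forall>S T. represents (posI ps) S T \<and> reduced S T \<longrightarrow>
                    carets S = Nval ps \<and> carets T = Nval ps)) \<and>
            (\<exists>t. \<not> posR ps differentiable (at t) \<and>
                 (\<forall>s > t. posR ps differentiable (at s)) \<and>
                 posR ps t = real (Nval ps)) \<and>
            real (Dval ps) / 2 \<le> real (Nval ps) \<and> Nval ps \<le> Dval ps + 1)
       \<and> (\<exists>C K::real. C > 0 \<and>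
            (\<forall>ps. pos_nf ps \<longrightarrow>
               real (Nval ps) \<le> C * real (word_length (posR ps)) + K \<and>
               real (word_length (posR ps)) \<le> C * real (Nval ps) + K))"
  using reduced_diagrams_posI posR_last_breakpoint pos_nf_Dval_bounds
    Nval_quasi_equivalent_word_length
  by blast

end
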